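(* Let $Q_2 = \{m^2 : m \in \mathbb{N}\}$, $Q_3 = \{m^3 : m \in \mathbb{N}\}$, and for integers $a \geq 2$ and $i \in \{0,\ldots,a-1\}$ let $\mathbb{M}_{a,i} = \{n \in \mathbb{N} : n \bmod a = i\}$. Then: (a) $\mathrm{cnum}(F) < \mathrm{cnum}(\mathbb{S})$ for every finite $F \subseteq \mathbb{N}$; (b) $\mathrm{cnum}(Q_3) < \mathrm{cnum}(\mathbb{S}) < \mathrm{cnum}(\mathbb{N})$; (c) $\mathrm{cnum}(\mathbb{S})$ and $\mathrm{cnum}(Q_2)$ are incomparable: neither $\mathrm{cnum}(\mathbb{S}) \leq \mathrm{cnum}(Q_2)$ nor $\mathrm{cnum}(Q_2) \leq \mathrm{cnum}(\mathbb{S})$; (d) for every $a \geq 2$ and $i \in \{0,\ldots,a-1\}$, $\mathrm{cnum}(\mathbb{S})$ and $\mathrm{cnum}(\mathbb{M}_{a,i})$ are incomparable in the same sense. In particular the order $\leq$ on $\mathcal{S}/\mathcal{F}$ is not total on the c-numerosities of subsets of $\mathbb{N}$.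
   Context: $\mathbb{N} = \{1,2,3,\ldots\}$; for $S \subseteq \mathbb{N}$, $f_n(S) = |S \cap \{1,\ldots,n\}|$. The set $\mathbb{S}$ is defined by: $n \in \mathbb{S}$ iff $n \geq 2$ and $\lceil \log_2(\log_2 n)\rceil$ is odd (equivalently, the union of the intervals $\{m : 2^{(2^{k-1})} < m \leq 2^{(2^k)}\}$ over odd $k\geq 1$). $\mathcal{S}/\mathcal{F}$ is the set of sequences of non-negative integers modulo $(x_n)\sim(y_n)$ iff $x_n=y_n$ for all but finitely many $n$, with $[x] \leq [y]$ iff $x_n \leq y_n$ for all but finitely many $n$, and $[x] < [y]$ iff $x_n < y_n$ for all but finitely many $n$. $\mathrm{cnum}(S) = [(f_n(S))_n]$. *)

theory Defs
  imports Complex_Main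
begin

definition Npos :: "nat set" where "Npos = {n. n \<ge> 1}"

definition fcount :: "nat \<Rightarrow> nat set \<Rightarrow> nat" where
  "fcount n S = card (S \<inter> {1..n})"

text \<open>Representative sequence of the c-numerosity cnum(S).\<close>
definition cnum :: "nat set \<Rightarrow> (nat \<Rightarrow> nat)" where
  "cnum S = (\<lambda>n. fcount n S)"

text \<open>Order on S/F, on representatives: eventually (for all but finitely many n).\<close>
definition sf_le :: "(nat \<Rightarrow> nat) \<Rightarrow> (nat \<Rightarrow> nat) \<Rightarrow> bool" where
  "sf_le x y \<longleftrightarrow> (\<forall>\<^sub>F n in sequentially. x n \<le> y n)"

definition sf_less :: "(nat \<Rightarrow> nat) \<Rightarrow> (nat \<Rightarrow> nat) \<Rightarrow> bool" where
  "sf_less x y \<longleftrightarrow> (\<forall>\<^sub>F n in sequentially. x n < y n)"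

definition Sset :: "nat set" where
  "Sset = {n. n \<ge> 2 \<and> odd \<lceil>log 2 (log 2 (real n))\<rceil>}"

definition Q2 :: "nat set" where "Q2 = {m^2 | m. m \<ge> 1}"
definition Q3 :: "nat set" where "Q3 = {m^3 | m. m \<ge> 1}"

definition Mset :: "nat \<Rightarrow> nat \<Rightarrow> nat set" where
  "Mset a i = {n. n \<ge> 1 \<and> n mod a = i}"

end

theory Submission imports Defs begin

text \<open>With \<open>tower j = 2^2^j\<close>, \<open>Sset\<close> is the union of the blocks \<open>(tower j, tower j\<^sup>2]\<close>
  for even \<open>j\<close>. At \<open>n = M\<^sup>2\<close>, \<open>M = tower j\<close>, its count is therefore below \<open>M\<close> for odd
  \<open>j\<close> and at least \<open>M\<^sup>2 - M\<close> for even \<open>j\<close>, while the squares and every residue class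
  have counts between these two values there; this gives the incomparabilities.
  The cubes lose against \<open>Sset\<close> everywhere: a complete block \<open>(m, m\<^sup>2]\<close> already
  contributes more than the cube root of \<open>n\<close> whenever \<open>n \<le> m\<^sup>4\<close>, and beyond \<open>m\<^sup>4\<close>
  the next block gains on the cubes.\<close>

lemma fcount_le_card: "finite F \<Longrightarrow> fcount n F \<le> card F"
  unfolding fcount_def by (intro card_mono) auto

lemma fcount_ge_interval:
  assumes "{a<..b} \<subseteq> S" "b \<le> n"
  shows "b - a \<le> fcount n S"
proof -
  have "card {a<..b} \<le> card (S \<inter> {1..n})" using assms by (intro card_mono) auto
  then show ?thesis by (simp add: fcount_def)
qed

lemma fcount_ge_two_intervals:
  assumes "{a<..b} \<subseteq> S" "{c<..n} \<subseteq> S" "b \<le> c" "c \<le> n"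
  shows "(b - a) + (n - c) \<le> fcount n S"
proof -
  have "card ({a<..b} \<union> {c<..n}) = card {a<..b} + card {c<..n}"
    using assms(3) by (intro card_Un_disjoint) auto
  moreover have "card ({a<..b} \<union> {c<..n}) \<le> card (S \<inter> {1..n})"
    using assms by (intro card_mono) auto
  ultimately show ?thesis by (simp add: fcount_def)
qed

lemma eventually_fcount_gt:
  assumes "infinite S"
  shows "\<forall>\<^sub>F n in sequentially. k < fcount n S"
proof -
  have "infinite (S - {0})" using assms by simp
  then obtain B where B: "finite B" "card B = Suc k" "B \<subseteq> S - {0}"
    using infinite_arbitrarily_large by blast
  then obtain N where N: "\<forall>x\<in>B. x \<le> N" using finite_nat_set_iff_bounded_le by blast
  have "Suc k \<le> fcount n S" if "N \<le> n" for n
  proof -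
    have "B \<subseteq> S \<inter> {1..n}" using B N that by force
    then show ?thesis using B(2) unfolding fcount_def by (metis card_mono finite_Int finite_atLeastAtMost)
  qed
  then show ?thesis unfolding eventually_sequentially by (auto simp: Suc_le_eq)
qed

lemma sf_less_finite_infinite:
  "finite F \<Longrightarrow> infinite S \<Longrightarrow> sf_less (cnum F) (cnum S)"
  unfolding sf_less_def cnum_def
  by (rule eventually_mono[OF eventually_fcount_gt[of S "card F"]])
     (auto intro: le_less_trans fcount_le_card)

lemma not_sf_le_if_frequently_less:
  "(\<And>N. \<exists>n\<ge>N. y n < x n) \<Longrightarrow> \<not> sf_le x y"
  unfolding sf_le_def not_eventually frequently_sequentially by (simp add: not_le)

definition tower :: "nat \<Rightarrow> nat" where "tower j = 2 ^ 2 ^ j"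

lemma tower_Suc: "tower (Suc j) = tower j ^ 2"
  by (simp add: tower_def power_mult[symmetric] mult.commute)

lemma tower_Suc_Suc: "tower (Suc (Suc j)) = tower j ^ 4"
  by (simp add: tower_Suc power_mult[symmetric])

lemma less_tower: "j < tower j"
  using less_exp[of j] less_exp[of "2 ^ j"] unfolding tower_def by linarith

lemma tower_mono: "i \<le> j \<Longrightarrow> tower i \<le> tower j"
  unfolding tower_def by (simp add: power_increasing)

lemma tower_ge_2: "2 \<le> tower j"
  using tower_mono[of 0 j] by (simp add: tower_def)

lemma real_tower: "real (tower j) = 2 powr (2 powr j)"
proof -
  have "(2::real) powr (2 powr j) = 2 powr real (2 ^ j)"
    by (simp add: powr_realpow)
  also have "\<dots> = 2 ^ 2 ^ j" by (subst powr_realpow) auto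
  finally show ?thesis by (simp add: tower_def)
qed

text \<open>The blocks \<open>(tower j, tower (Suc j)]\<close> are exactly the intervals on which
  \<open>\<lceil>log 2 (log 2 n)\<rceil> = j + 1\<close>.\<close>
lemma Sset_block_iff:
  assumes "tower j < n" "n \<le> tower (Suc j)"
  shows "n \<in> Sset \<longleftrightarrow> even j"
proof -
  have n: "2 \<le> n" using tower_ge_2[of j] assms(1) by linarith
  have "2 powr j < log 2 n"
    using assms(1) real_tower[of j] by (subst less_log_iff) auto
  moreover have "log 2 n \<le> 2 powr (j + 1)"
    using assms(2) real_tower[of "Suc j"] n by (subst log_le_iff) auto
  ultimately have "\<lceil>log 2 (log 2 n)\<rceil> = int j + 1"
    using n by (subst ceiling_log_eq_powr_iff) auto
  then show ?thesis using n unfolding Sset_def by simp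
qed

lemma even_block_subset_Sset: "even j \<Longrightarrow> {tower j<..tower (Suc j)} \<subseteq> Sset"
  using Sset_block_iff by auto

lemma one_notin_Sset: "1 \<notin> Sset"
  unfolding Sset_def by simp

lemma tower_less_tower_Suc: "tower j < tower (Suc j)"
  using tower_ge_2[of j] by (simp add: tower_Suc power2_eq_square)

lemma infinite_Sset: "infinite Sset"
proof
  assume "finite Sset"
  then obtain m where m: "\<forall>n\<in>Sset. n \<le> m" using finite_nat_set_iff_bounded_le by blast
  have "tower (Suc (2 * m)) \<in> Sset"
    using even_block_subset_Sset[of "2 * m"] tower_less_tower_Suc[of "2 * m"] by auto
  moreover have "m < tower (Suc (2 * m))" using less_tower[of "Suc (2 * m)"] by simp
  ultimately show False using m by fastforce
qed

lemma fcount_Sset_odd_block: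
  assumes "odd j"
  shows "fcount (tower (Suc j)) Sset < tower j"
proof -
  have "Sset \<inter> {1..tower (Suc j)} \<subseteq> {2..tower j}"
  proof
    fix x assume x: "x \<in> Sset \<inter> {1..tower (Suc j)}"
    then have "x \<noteq> 1" using one_notin_Sset by auto
    moreover have "\<not> tower j < x" using x Sset_block_iff[of j x] assms by auto
    ultimately show "x \<in> {2..tower j}" using x by auto
  qed
  then have "fcount (tower (Suc j)) Sset \<le> card {2..tower j}"
    unfolding fcount_def by (intro card_mono) auto
  then show ?thesis using tower_ge_2[of j] by simp
qed

lemma fcount_Sset_even_block:
  "even j \<Longrightarrow> tower j ^ 2 - tower j \<le> fcount (tower (Suc j)) Sset"
  using fcount_ge_interval[OF even_block_subset_Sset] by (simp add: tower_Suc)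

lemma tower_block_exists:
  assumes "2 < n"
  obtains j where "tower j < n" "n \<le> tower (Suc j)"
proof -
  define k where "k = (LEAST k. n \<le> tower k)"
  have k: "n \<le> tower k"
    unfolding k_def by (rule LeastI[of _ n]) (use less_tower[of n] in simp)
  have "k \<noteq> 0"
  proof
    assume "k = 0"
    then show False using k assms by (simp add: tower_def)
  qed
  then obtain j where j: "k = Suc j" using not0_implies_Suc by blast
  have "\<not> n \<le> tower j"
    using not_less_Least[of j "\<lambda>k. n \<le> tower k"] j unfolding k_def by simp
  then show ?thesis using that[of j] k j by (simp add: not_le)
qed

text \<open>Below \<open>n\<close> lies at least one complete block of \<open>Sset\<close> of the form
  \<open>(m, m\<^sup>2]\<close>, followed either by the gap \<open>(m\<^sup>2, m\<^sup>4]\<close> containing \<open>n\<close>,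
  or by the gap and then the partial block \<open>(m\<^sup>4, n]\<close>.\<close>
lemma fcount_Sset_lower:
  assumes "256 < n"
  obtains m where "4 \<le> m" "m ^ 2 - m + (n - m ^ 4) \<le> fcount n Sset"
proof -
  obtain j where j: "tower j < n" "n \<le> tower (Suc j)"
    using tower_block_exists[of n] assms by auto
  have "3 \<le> j"
  proof (rule ccontr)
    assume "\<not> 3 \<le> j"
    then have "tower (Suc j) \<le> tower 3" by (intro tower_mono) simp
    then show False using j(2) assms by (simp add: tower_def)
  qed
  obtain i where i: "2 \<le> i" "even i" "j = Suc i \<or> j = Suc (Suc i)"
  proof (cases "even j")
    case True
    moreover have "4 \<le> j" using True \<open>3 \<le> j\<close> by presburger
    ultimately show ?thesis by (intro that[of "j - 2"]) presburger+
  next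
    case False
    then show ?thesis using \<open>3 \<le> j\<close> by (intro that[of "j - 1"]) presburger+
  qed
  define m where "m = tower i"
  have m: "4 \<le> m" using tower_mono[OF i(1)] by (simp add: m_def tower_def)
  have block: "{m<..m ^ 2} \<subseteq> Sset"
    using even_block_subset_Sset[OF i(2)] by (simp add: m_def tower_Suc)
  from i(3) show ?thesis
  proof
    assume "j = Suc i"
    then have "m ^ 2 - m \<le> fcount n Sset" "n \<le> m ^ 4"
      using fcount_ge_interval[OF block] j by (auto simp: m_def tower_Suc tower_Suc_Suc)
    then show ?thesis using that m by simp
  next
    assume ji: "j = Suc (Suc i)"
    then have "{m ^ 4<..n} \<subseteq> Sset" "m ^ 4 \<le> n"
      using even_block_subset_Sset[of j] i(2) j by (auto simp: m_def tower_Suc_Suc)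
    moreover have "m ^ 2 \<le> m ^ 4" using m by (intro power_increasing) auto
    ultimately show ?thesis using that m fcount_ge_two_intervals[OF block] by simp
  qed
qed

lemma fourth_power_plus_less_cube:
  fixes m d :: nat
  assumes "4 \<le> m"
  shows "m ^ 4 + d < (m ^ 2 - m + d) ^ 3"
proof -
  define y where "y = m ^ 2 - m"
  have y: "y = m * (m - 1)" by (simp add: y_def power2_eq_square algebra_simps)
  have "m < (m - 1) ^ 3"
  proof -
    have "3 * 3 * (m - 1) \<le> (m - 1) * (m - 1) * (m - 1)"
      using assms by (intro mult_right_mono mult_mono) auto
    then show ?thesis using assms unfolding power3_eq_cube by linarith
  qed
  then have "m ^ 4 < y ^ 3"
    using assms by (simp add: y power_mult_distrib numeral_eq_Suc)
  moreover have "d \<le> d ^ 3" by (cases "d = 0") (auto intro: self_le_power)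
  moreover have "y ^ 3 + d ^ 3 \<le> (y + d) ^ 3"
    by (simp add: power3_eq_cube algebra_simps)
  ultimately show ?thesis by (simp add: y_def)
qed

lemma fcount_powers_less:
  assumes "0 < k" "n < c ^ k"
  shows "fcount n {m ^ k | m. m \<ge> 1} < c"
proof -
  have "{m ^ k | m. m \<ge> 1} \<inter> {1..n} \<subseteq> (\<lambda>x. x ^ k) ` {1..<c}"
  proof
    fix y assume "y \<in> {m ^ k | m. m \<ge> 1} \<inter> {1..n}"
    then obtain x where x: "y = x ^ k" "1 \<le> x" "x ^ k < c ^ k" using assms(2) by auto
    then have "x < c" using power_less_imp_less_base by blast
    then show "y \<in> (\<lambda>x. x ^ k) ` {1..<c}" using x by auto
  qed
  then have "fcount n {m ^ k | m. m \<ge> 1} \<le> card ((\<lambda>x. x ^ k) ` {1..<c})"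
    unfolding fcount_def by (intro card_mono) auto
  also have "\<dots> \<le> c - 1" using card_image_le[of "{1..<c}" "\<lambda>x. x ^ k"] by simp
  finally show ?thesis using assms by (cases c) (auto simp: zero_power)
qed

lemma fcount_powers_ge:
  assumes "0 < k" "c ^ k \<le> n"
  shows "c \<le> fcount n {m ^ k | m. m \<ge> 1}"
proof -
  have "(\<lambda>x. x ^ k) ` {1..c} \<subseteq> {m ^ k | m. m \<ge> 1} \<inter> {1..n}"
    using assms by (auto intro: order_trans[OF power_mono])
  then have "card ((\<lambda>x. x ^ k) ` {1..c}) \<le> fcount n {m ^ k | m. m \<ge> 1}"
    unfolding fcount_def by (intro card_mono) auto
  moreover have "inj_on (\<lambda>x. x ^ k) {1..c}"
    using assms(1) by (intro inj_onI) (metis power_eq_imp_eq_base zero_le)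
  ultimately show ?thesis by (simp add: card_image)
qed

lemma fcount_Q3_less_Sset:
  assumes "256 < n"
  shows "fcount n Q3 < fcount n Sset"
proof -
  obtain m where m: "4 \<le> m" "m ^ 2 - m + (n - m ^ 4) \<le> fcount n Sset"
    using fcount_Sset_lower[OF assms] by blast
  have "n \<le> m ^ 4 + (n - m ^ 4)" by simp
  then have "fcount n Q3 < m ^ 2 - m + (n - m ^ 4)"
    unfolding Q3_def using fourth_power_plus_less_cube[OF m(1)]
    by (intro fcount_powers_less) (auto intro: le_less_trans)
  then show ?thesis using m(2) by linarith
qed

lemma Sset_incomparable:
  assumes "\<forall>\<^sub>F M in sequentially. M \<le> fcount (M ^ 2) A \<and> fcount (M ^ 2) A + M < M ^ 2"
  shows "\<not> sf_le (cnum Sset) (cnum A) \<and> \<not> sf_le (cnum A) (cnum Sset)"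
proof -
  obtain N where N: "\<And>M. N \<le> M \<Longrightarrow> M \<le> fcount (M ^ 2) A \<and> fcount (M ^ 2) A + M < M ^ 2"
    using assms unfolding eventually_sequentially by blast
  have large: "N \<le> tower j" "N' \<le> tower (Suc j)" if "N + N' \<le> j" for j N'
    using less_tower[of j] less_tower[of "Suc j"] that by linarith+
  have "\<exists>n\<ge>N'. fcount n Sset < fcount n A" for N'
  proof -
    define j where "j = 2 * (N + N') + 1"
    have j: "N \<le> tower j" "N' \<le> tower (Suc j)" using large[where j=j and N'=N'] by (simp_all add: j_def)
    have "fcount (tower (Suc j)) Sset < tower j"
      by (rule fcount_Sset_odd_block) (simp add: j_def)
    also have "\<dots> \<le> fcount (tower (Suc j)) A"
      using N[OF j(1)] by (simp add: tower_Suc)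
    finally show ?thesis using j(2) by blast
  qed
  moreover have "\<exists>n\<ge>N'. fcount n A < fcount n Sset" for N'
  proof -
    define j where "j = 2 * (N + N') + 2"
    have j: "N \<le> tower j" "N' \<le> tower (Suc j)" using large[where j=j and N'=N'] by (simp_all add: j_def)
    have "fcount (tower (Suc j)) A < tower j ^ 2 - tower j"
      using N[OF j(1)] unfolding tower_Suc by linarith
    also have "\<dots> \<le> fcount (tower (Suc j)) Sset"
      by (rule fcount_Sset_even_block) (simp add: j_def)
    finally show ?thesis using j(2) by blast
  qed
  ultimately show ?thesis
    unfolding cnum_def by (intro conjI not_sf_le_if_frequently_less) auto
qed

lemma fcount_Mset_le:
  assumes "0 < a"
  shows "fcount n (Mset a i) \<le> n div a + 1"
proof -
  have "inj_on (\<lambda>x. x div a) (Mset a i)"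
  proof (rule inj_onI)
    fix x y assume "x \<in> Mset a i" "y \<in> Mset a i" "x div a = y div a"
    then have "x div a * a + x mod a = y div a * a + y mod a" by (simp add: Mset_def)
    then show "x = y" by simp
  qed
  moreover have "(\<lambda>x. x div a) ` (Mset a i \<inter> {1..n}) \<subseteq> {0..n div a}"
    by (auto intro: div_le_mono)
  ultimately have "fcount n (Mset a i) \<le> card {0..n div a}"
    unfolding fcount_def by (intro card_inj_on_le) (auto intro: inj_on_subset)
  then show ?thesis by simp
qed

lemma fcount_Mset_ge:
  assumes "i < a"
  shows "n div a - 1 \<le> fcount n (Mset a i)"
proof -
  have "(\<lambda>q. q * a + i) ` {1..<n div a} \<subseteq> Mset a i \<inter> {1..n}"
  proof
    fix y assume "y \<in> (\<lambda>q. q * a + i) ` {1..<n div a}"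
    then obtain q where "q \<in> {1..<n div a}" "y = q * a + i" by blast
    then have q: "y = q * a + i" "1 \<le> q" "Suc q \<le> n div a" by auto
    have "y < Suc q * a" using q(1) assms by simp
    also have "\<dots> \<le> n div a * a" using q(3) by (rule mult_right_mono) simp
    also have "\<dots> \<le> n" by simp
    finally show "y \<in> Mset a i \<inter> {1..n}"
      using q assms unfolding Mset_def by (auto simp: Suc_le_eq)
  qed
  moreover have "inj_on (\<lambda>q. q * a + i) {1..<n div a}" using assms by (intro inj_onI) simp
  ultimately have "card {1..<n div a} \<le> fcount n (Mset a i)"
    unfolding fcount_def by (intro card_inj_on_le) auto
  then show ?thesis by simp
qed

lemma fcount_Q2_square: "fcount (M ^ 2) Q2 = M"
proof (rule antisym)
  show "fcount (M ^ 2) Q2 \<le> M"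
    using fcount_powers_less[of 2 "M ^ 2" "Suc M"] unfolding Q2_def by (simp add: power_strict_mono)
  show "M \<le> fcount (M ^ 2) Q2"
    using fcount_powers_ge[of 2 M "M ^ 2"] unfolding Q2_def by simp
qed

lemma Q2_square_count_bounds:
  "\<forall>\<^sub>F M in sequentially. M \<le> fcount (M ^ 2) Q2 \<and> fcount (M ^ 2) Q2 + M < M ^ 2"
  unfolding eventually_sequentially fcount_Q2_square
proof (intro exI allI impI)
  fix M :: nat assume "3 \<le> M"
  then have "3 * M \<le> M * M" by (rule mult_right_mono) simp
  then show "M \<le> M \<and> M + M < M ^ 2" using \<open>3 \<le> M\<close> unfolding power2_eq_square by linarith
qed

lemma Mset_square_count_bounds:
  assumes "2 \<le> a" "i < a"
  shows "\<forall>\<^sub>F M in sequentially. M \<le> fcount (M ^ 2) (Mset a i) \<and> fcount (M ^ 2) (Mset a i) + M < M ^ 2"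
  unfolding eventually_sequentially
proof (intro exI allI impI conjI)
  fix M :: nat assume M: "2 * a \<le> M"
  have "a * (M + 1) \<le> M * M"
  proof -
    have "a * (M + 1) \<le> a * (2 * M)" using M by simp
    also have "\<dots> \<le> M * M" using M by (simp add: mult.assoc[symmetric] mult.commute[of a 2])
    finally show ?thesis .
  qed
  then have "M + 1 \<le> M ^ 2 div a"
    using assms by (simp add: less_eq_div_iff_mult_less_eq power2_eq_square mult.commute)
  then show "M \<le> fcount (M ^ 2) (Mset a i)"
    using fcount_Mset_ge[OF assms(2), of "M ^ 2"] by linarith
  have "2 * (M ^ 2 div a) \<le> M ^ 2"
    using div_le_mono2[of 2 a "M ^ 2"] assms(1) by (simp add: div_times_less_eq_dividend[of 2] order_trans)
  moreover have "4 * M \<le> M * M" using M assms(1) by (intro mult_right_mono) auto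
  ultimately show "fcount (M ^ 2) (Mset a i) + M < M ^ 2"
    using fcount_Mset_le[of a "M ^ 2" i] assms M unfolding power2_eq_square by linarith
qed

lemma fcount_Npos: "fcount n Npos = n"
  unfolding fcount_def Npos_def by (simp add: Int_absorb1 subset_eq)

lemma fcount_Sset_less: "1 \<le> n \<Longrightarrow> fcount n Sset < n"
proof -
  assume n: "1 \<le> n"
  have "Sset \<inter> {1..n} \<subseteq> {2..n}"
  proof
    fix x assume "x \<in> Sset \<inter> {1..n}"
    then show "x \<in> {2..n}" using one_notin_Sset by (cases "x = 1") auto
  qed
  then have "fcount n Sset \<le> card {2..n}" unfolding fcount_def by (intro card_mono) auto
  then show ?thesis using n by simp
qed

theorem mainTheorem9:
  shows "(\<forall>F. finite F \<and> F \<subseteq> Npos \<longrightarrow> sf_less (cnum F) (cnum Sset))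
    \<and> (sf_less (cnum Q3) (cnum Sset) \<and> sf_less (cnum Sset) (cnum Npos))
    \<and> (\<not> sf_le (cnum Sset) (cnum Q2) \<and> \<not> sf_le (cnum Q2) (cnum Sset))
    \<and> (\<forall>a i. a \<ge> 2 \<and> i < a \<longrightarrow>
         \<not> sf_le (cnum Sset) (cnum (Mset a i)) \<and> \<not> sf_le (cnum (Mset a i)) (cnum Sset))"
proof (intro conjI allI impI)
  show "sf_less (cnum F) (cnum Sset)" if "finite F \<and> F \<subseteq> Npos" for F
    using sf_less_finite_infinite infinite_Sset that by blast
  show "sf_less (cnum Q3) (cnum Sset)"
    unfolding sf_less_def cnum_def eventually_sequentially
    by (intro exI[of _ 257] allI impI fcount_Q3_less_Sset) simp
  show "sf_less (cnum Sset) (cnum Npos)"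
    unfolding sf_less_def cnum_def eventually_sequentially fcount_Npos
    by (intro exI[of _ 1] allI impI fcount_Sset_less)
  show "\<not> sf_le (cnum Sset) (cnum Q2)" "\<not> sf_le (cnum Q2) (cnum Sset)"
    using Sset_incomparable[OF Q2_square_count_bounds] by blast+
  show "\<not> sf_le (cnum Sset) (cnum (Mset a i))" "\<not> sf_le (cnum (Mset a i)) (cnum Sset)"
    if "a \<ge> 2 \<and> i < a" for a i
    using Sset_incomparable[OF Mset_square_count_bounds] that by blast+
qed

end
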